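(* Let $\underline{X}=(X_n,p_n)$ and $\underline{Y}=(Y_n,q_n)$ be inverse sequences of sets, let $(f_n,\Phi):\underline{X}\to\underline{Y}$ be a morphism of inverse sequences, let $(t_k)_{k\ge1}$ be integers with $t_1>\Phi(1),\Phi(2)$, $t_k>t_{k-1},\Phi(k+1)$ for $k\ge2$, and $f_i\circ p_{\Phi(i)t_k}=q_{i,k+1}\circ f_{k+1}\circ p_{\Phi(k+1)t_k}$ for all $i\le k$, and let $\hat f:(T_{\underline{X}},v)\to(T_{\underline{Y}},w)$ be the map defined below. Then $\hat f$ is non-expansive, i.e. $d(\hat f(x),\hat f(x'))\le d(x,x')$ for all $x,x'\in T_{\underline{X}}$.
   Context: For an inverse sequence of sets $(X_n,p_n)_{n\ge1}$ ($p_n:X_{n+1}\to X_n$, $p_{nm}=p_n\circ\cdots\circ p_{m-1}:X_m\to X_n$ for $n<m$, $p_{nn}=\mathrm{id}$), the tree $T_{\underline{X}}$ is the geometric realization of the graph with vertex set $\{v\}\sqcup\bigsqcup_n X_n$ and edges $\{x,p_n(x)\}$ for $x\in X_{n+1}$ and $\{x,v\}$ for $x\in X_1$, each edge of length 1, with the path metric, rooted at $v$; vertices of $X_n$ are at distance $n$ from $v$. Similarly $(T_{\underline{Y}},w)$. A morphism $(f_n,\Phi)$ consists of $\Phi:\mathbb{N}\to\mathbb{N}$ and maps $f_n:X_{\Phi(n)}\to Y_n$ such that for all $n'>n$ there is $m\ge\Phi(n),\Phi(n')$ with $f_n\circ p_{\Phi(n)m}=q_{nn'}\circ f_{n'}\circ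 p_{\Phi(n')m}$. Definition of $\hat f$: let $x\in T_{\underline{X}}$ with $t=d(v,x)$, and for each integer $j\le t$ let $x_j$ be the vertex of $X_j$ lying on the arc $[v,x]$. If $t\le t_1$ put $\hat f(x)=w$. If $t_k\le t\le t_{k+1}$ with $k\ge1$, put $y_0=w$ and $y_j=f_j(x_{\Phi(j)})\in Y_j$ for $j\ge1$; then $y_{k-1},y_k$ are adjacent vertices of $T_{\underline{Y}}$, and $\hat f(x)$ is the point of the edge $[y_{k-1},y_k]$ at distance $\frac{t-t_k}{t_{k+1}-t_k}$ from $y_{k-1}$. *)

theory Defs
  imports Complex_Main
begin

text \<open>Inverse sequences of sets are indexed from 1: X :: nat => 'a set (level n),
  bonding maps p n : X (n+1) -> X n.\<close>

definition inv_seq :: "(nat \<Rightarrow> 'a set) \<Rightarrow> (nat \<Rightarrow> 'a \<Rightarrow> 'a) \<Rightarrow> bool" where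
  "inv_seq X p \<longleftrightarrow> (\<forall>n\<ge>1. \<forall>x\<in>X (Suc n). p n x \<in> X n)"

text \<open>prj p n k = p_{n,n+k} = p_n o ... o p_{n+k-1}\<close>
fun prj :: "(nat \<Rightarrow> 'a \<Rightarrow> 'a) \<Rightarrow> nat \<Rightarrow> nat \<Rightarrow> 'a \<Rightarrow> 'a" where
  "prj p n 0 x = x"
| "prj p n (Suc k) x = prj p n k (p (n + k) x)"

definition pnm :: "(nat \<Rightarrow> 'a \<Rightarrow> 'a) \<Rightarrow> nat \<Rightarrow> nat \<Rightarrow> 'a \<Rightarrow> 'a" where
  "pnm p n m x = prj p n (m - n) x"

definition inv_seq_morphism ::
  "(nat \<Rightarrow> 'a set) \<Rightarrow> (nat \<Rightarrow> 'a \<Rightarrow> 'a) \<Rightarrow> (nat \<Rightarrow> 'b set) \<Rightarrow> (nat \<Rightarrow> 'b \<Rightarrow> 'b)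
    \<Rightarrow> (nat \<Rightarrow> 'a \<Rightarrow> 'b) \<Rightarrow> (nat \<Rightarrow> nat) \<Rightarrow> bool" where
  "inv_seq_morphism X p Y q f \<Phi> \<longleftrightarrow>
     (\<forall>n\<ge>1. \<Phi> n \<ge> 1 \<and> (\<forall>x\<in>X (\<Phi> n). f n x \<in> Y n)) \<and>
     (\<forall>n n'. 1 \<le> n \<and> n < n' \<longrightarrow>
        (\<exists>m. m \<ge> \<Phi> n \<and> m \<ge> \<Phi> n' \<and>
           (\<forall>x\<in>X m. f n (pnm p (\<Phi> n) m x) = pnm q n n' (f n' (pnm p (\<Phi> n') m x)))))"

text \<open>Points of the geometric realization T_X of the tree: the root v, or
  Pt n x s with n >= 1, x in X n and n - 1 < s <= n, the point of the edge
  [p_{n-1}(x), x] (resp. [v, x] if n = 1) at distance s from the root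
  (Pt n x n is the vertex x itself).\<close>
datatype 'a tpt = Root | Pt nat 'a real

definition tree_pts :: "(nat \<Rightarrow> 'a set) \<Rightarrow> 'a tpt set" where
  "tree_pts X = {Root} \<union> {Pt n x s | n x s. 1 \<le> n \<and> x \<in> X n \<and> real n - 1 < s \<and> s \<le> real n}"

fun height :: "'a tpt \<Rightarrow> real" where
  "height Root = 0"
| "height (Pt n x s) = s"

text \<open>distance from the root of the meeting point of the arcs [v,a] and [v,b]\<close>
fun meet_height :: "(nat \<Rightarrow> 'a \<Rightarrow> 'a) \<Rightarrow> 'a tpt \<Rightarrow> 'a tpt \<Rightarrow> real" where
  "meet_height p Root b = 0"
| "meet_height p a Root = 0"
| "meet_height p (Pt n x s) (Pt m y r) =
     min (min s r) (real (Max ({0} \<union> {j. 1 \<le> j \<and> j \<le> min n m \<and> pnm p j n x = pnm p j m y})))"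

definition tdist :: "(nat \<Rightarrow> 'a \<Rightarrow> 'a) \<Rightarrow> 'a tpt \<Rightarrow> 'a tpt \<Rightarrow> real" where
  "tdist p a b = height a + height b - 2 * meet_height p a b"

text \<open>For a point at height s with t_k < s <= t_(k+1) the image is the
  point of the edge [y_(k-1), y_k] at distance (s - t_k)/(t_(k+1) - t_k) from y_(k-1),
  where y_k = f_k(x_(Phi k)).  (The endpoint case s = t_k of the paper gives the same
  point y_(k-1) either way.)\<close>
definition fhat :: "(nat \<Rightarrow> 'a \<Rightarrow> 'a) \<Rightarrow> (nat \<Rightarrow> 'a \<Rightarrow> 'b) \<Rightarrow> (nat \<Rightarrow> nat) \<Rightarrow> (nat \<Rightarrow> nat)
    \<Rightarrow> 'a tpt \<Rightarrow> 'b tpt" where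
  "fhat p f \<Phi> t a = (case a of
      Root \<Rightarrow> Root
    | Pt n z s \<Rightarrow>
        (if s \<le> real (t 1) then Root
         else let k = (THE k. 1 \<le> k \<and> real (t k) < s \<and> s \<le> real (t (Suc k)));
                  lam = (s - real (t k)) / (real (t (Suc k)) - real (t k))
              in Pt k (f k (pnm p (\<Phi> k) n z)) (real k - 1 + lam)))"

end

theory Submission
  imports Defs
begin

text \<open>The height of \<open>\<hat>f(x)\<close> is \<open>G(|x|)\<close> with \<open>G = rescale_height t\<close>, a piecewise linear
  reparametrisation with slopes \<open>1/(t(k+1) - t(k)) \<le> 1\<close>; so \<open>G\<close> is monotone and 1-Lipschitz.
  As \<open>d(a,b) = |a| + |b| - 2|a\<and>b|\<close>, it suffices that the images meet at height at least
  \<open>G(|a\<and>b|)\<close>.  If \<open>t(j) < |a\<and>b| \<le> t(j+1)\<close>, then \<open>a\<close> and \<open>b\<close> have a common ancestor at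
  level \<open>\<Phi>(j) < t(j)\<close>, and the compatibility condition on the \<open>t(k)\<close> makes the vertices of
  both images project at level \<open>j \<ge> G(|a\<and>b|)\<close> to its image under \<open>f(j)\<close>.\<close>

lemma prj_add: "prj p a (k1 + k2) z = prj p a k1 (prj p (a + k1) k2 z)"
  by (induction k2 arbitrary: z) (simp_all add: add.assoc)

lemma pnm_trans: "a \<le> b \<Longrightarrow> b \<le> c \<Longrightarrow> pnm p a c z = pnm p a b (pnm p b c z)"
  unfolding pnm_def using prj_add[of p a "b - a" "c - b" z] by simp

lemma pnm_self [simp]: "pnm p a a z = z"
  by (simp add: pnm_def)

lemma prj_in: "inv_seq X p \<Longrightarrow> 1 \<le> a \<Longrightarrow> z \<in> X (a + k) \<Longrightarrow> prj p a k z \<in> X a"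
proof (induction k arbitrary: z)
  case (Suc k)
  then have "p (a + k) z \<in> X (a + k)" unfolding inv_seq_def by simp
  then show ?case using Suc by simp
qed simp

lemma pnm_in: "inv_seq X p \<Longrightarrow> 1 \<le> a \<Longrightarrow> a \<le> c \<Longrightarrow> z \<in> X c \<Longrightarrow> pnm p a c z \<in> X a"
  unfolding pnm_def using prj_in[of X p a z "c - a"] by simp

definition stage :: "(nat \<Rightarrow> nat) \<Rightarrow> real \<Rightarrow> nat" where
  "stage t s = (THE k. 1 \<le> k \<and> real (t k) < s \<and> s \<le> real (t (Suc k)))"

definition rescale_height :: "(nat \<Rightarrow> nat) \<Rightarrow> real \<Rightarrow> real" where
  "rescale_height t s = (if s \<le> real (t 1) then 0 else
     real (stage t s) - 1 +
     (s - real (t (stage t s))) / (real (t (Suc (stage t s))) - real (t (stage t s))))"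

lemma divide_le_self: "1 \<le> (d::real) \<Longrightarrow> 0 \<le> x \<Longrightarrow> x / d \<le> x"
  using divide_left_mono[of 1 d x] by simp

locale time_scale =
  fixes t :: "nat \<Rightarrow> nat"
  assumes t_Suc_gt: "\<And>k. 1 \<le> k \<Longrightarrow> t k < t (Suc k)"
begin

lemma t_diff_ge:
  assumes "1 \<le> i" "i \<le> j" shows "real j - real i \<le> real (t j) - real (t i)"
  using assms(2)
proof (induction j rule: dec_induct)
  case (step j)
  then show ?case using t_Suc_gt[of j] assms(1) by simp
qed simp

lemma t_mono: "1 \<le> i \<Longrightarrow> i \<le> j \<Longrightarrow> t i \<le> t j"
  using t_diff_ge[of i j] by simp

lemma stage_exists:
  assumes "real (t 1) < s" shows "\<exists>k. 1 \<le> k \<and> real (t k) < s \<and> s \<le> real (t (Suc k))"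
proof -
  obtain N :: nat where "s \<le> real N" using real_arch_simple by blast
  then have "s \<le> real (t (Suc N))" using t_diff_ge[of 1 "Suc N"] by simp
  then show ?thesis
  proof (induction N)
    case (Suc N)
    then show ?case by (cases "s \<le> real (t (Suc N))") (auto intro: exI[of _ "Suc N"])
  qed (use assms in simp)
qed

lemma stage_unique:
  assumes "1 \<le> k" "real (t k) < s" "s \<le> real (t (Suc k))"
    and "1 \<le> k'" "real (t k') < s" "s \<le> real (t (Suc k'))"
  shows "k = k'"
  using assms t_mono[of "Suc k" k'] t_mono[of "Suc k'" k]
  by (cases k k' rule: linorder_cases) auto

lemma stage_spec:
  assumes "real (t 1) < s"
  shows "1 \<le> stage t s" "real (t (stage t s)) < s" "s \<le> real (t (Suc (stage t s)))"
proof -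
  have "\<exists>!k. 1 \<le> k \<and> real (t k) < s \<and> s \<le> real (t (Suc k))"
    using stage_exists[OF assms] stage_unique by blast
  from theI'[OF this] show "1 \<le> stage t s" "real (t (stage t s)) < s"
      "s \<le> real (t (Suc (stage t s)))"
    unfolding stage_def by auto
qed

lemma stage_mono:
  assumes "real (t 1) < u" "u \<le> v" shows "stage t u \<le> stage t v"
proof (rule ccontr)
  assume "\<not> stage t u \<le> stage t v"
  then have "t (Suc (stage t v)) \<le> t (stage t u)"
    using t_mono[of "Suc (stage t v)" "stage t u"] by simp
  then show False
    using stage_spec(2)[OF assms(1)] stage_spec(3)[of v] assms by fastforce
qed

lemma rescale_height_low: "s \<le> real (t 1) \<Longrightarrow> rescale_height t s = 0"
  by (simp add: rescale_height_def)

lemma rescale_height_high: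
  "real (t 1) < s \<Longrightarrow> rescale_height t s = real (stage t s) - 1 +
     (s - real (t (stage t s))) / (real (t (Suc (stage t s))) - real (t (stage t s)))"
  by (simp add: rescale_height_def)

lemma rescale_height_bounds:
  assumes "real (t 1) < s"
  defines "k \<equiv> stage t s"
  shows "real k - 1 < rescale_height t s" "rescale_height t s \<le> real k"
    and "rescale_height t s - (real k - 1) \<le> s - real (t k)"
    and "real k - rescale_height t s \<le> real (t (Suc k)) - s"
proof -
  have k: "1 \<le> k" "real (t k) < s" "s \<le> real (t (Suc k))"
    using stage_spec[OF assms(1)] k_def by auto
  define d where "d = real (t (Suc k)) - real (t k)"
  have d: "1 \<le> d" using t_Suc_gt[OF k(1)] d_def by simp
  have G: "rescale_height t s = real k - 1 + (s - real (t k)) / d"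
    using rescale_height_high[OF assms(1)] k_def d_def by simp
  have "1 - (s - real (t k)) / d = (real (t (Suc k)) - s) / d"
    using d d_def by (simp add: field_simps)
  moreover have "(real (t (Suc k)) - s) / d \<le> real (t (Suc k)) - s"
    using k d by (simp add: divide_le_self)
  moreover have "(s - real (t k)) / d \<le> s - real (t k)"
    using k d by (simp add: divide_le_self)
  moreover have "0 < (s - real (t k)) / d" "(s - real (t k)) / d \<le> 1"
    using k d d_def by auto
  ultimately show "real k - 1 < rescale_height t s" "rescale_height t s \<le> real k"
    "rescale_height t s - (real k - 1) \<le> s - real (t k)"
    "real k - rescale_height t s \<le> real (t (Suc k)) - s"
    unfolding G by linarith+
qed

lemma rescale_height_nonneg: "0 \<le> rescale_height t s"
  using rescale_height_bounds(1)[of s] stage_spec(1)[of s]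
  by (cases "s \<le> real (t 1)") (simp_all add: rescale_height_low)

lemma rescale_height_same_stage:
  assumes "real (t 1) < u" "u \<le> v" "stage t u = stage t v"
  shows "rescale_height t v - rescale_height t u
           = (v - u) / (real (t (Suc (stage t v))) - real (t (stage t v)))"
  using assms rescale_height_high[of u] rescale_height_high[of v]
  by (simp add: diff_divide_distrib)

lemma rescale_height_mono:
  assumes "u \<le> v" shows "rescale_height t u \<le> rescale_height t v"
proof (cases "u \<le> real (t 1)")
  case True
  then show ?thesis by (simp add: rescale_height_low rescale_height_nonneg)
next
  case False
  then have u: "real (t 1) < u" and v: "real (t 1) < v" using assms by auto
  show ?thesis
  proof (cases "stage t u = stage t v")
    case True
    have "0 < real (t (Suc (stage t v))) - real (t (stage t v))"
      using t_Suc_gt[OF stage_spec(1)[OF v]] by simp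
    then have "0 \<le> (v - u) / (real (t (Suc (stage t v))) - real (t (stage t v)))"
      using assms by simp
    then show ?thesis
      using rescale_height_same_stage[OF u assms True] by simp
  next
    case False
    then have "stage t u + 1 \<le> stage t v" using stage_mono[OF u assms] by simp
    then show ?thesis using rescale_height_bounds[OF u] rescale_height_bounds[OF v] by linarith
  qed
qed

lemma rescale_height_lipschitz:
  assumes "u \<le> v" shows "rescale_height t v - rescale_height t u \<le> v - u"
proof (cases "v \<le> real (t 1)")
  case True
  then show ?thesis using assms by (simp add: rescale_height_low)
next
  case False
  then have v: "real (t 1) < v" by simp
  define k where "k = stage t v"
  have k: "1 \<le> k" using stage_spec(1)[OF v] k_def by simp
  have from_left: "rescale_height t v - (real k - 1) \<le> v - real (t k)"
    using rescale_height_bounds(3)[OF v] k_def by simp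
  show ?thesis
  proof (cases "u \<le> real (t 1)")
    case True
    then show ?thesis
      using from_left t_diff_ge[OF order.refl k] by (simp add: rescale_height_low)
  next
    case False
    then have u: "real (t 1) < u" by simp
    define i where "i = stage t u"
    show ?thesis
    proof (cases "i = k")
      case True
      have "1 \<le> real (t (Suc k)) - real (t k)" using t_Suc_gt[OF k] by simp
      then show ?thesis
        using rescale_height_same_stage[OF u assms] True assms i_def k_def
        by (simp add: divide_le_self)
    next
      case False
      then have "Suc i \<le> k" using stage_mono[OF u assms] i_def k_def by simp
      then show ?thesis
        using t_diff_ge[of "Suc i" k] rescale_height_bounds(4)[OF u] from_left i_def
        by simp
    qed
  qed
qed

end

lemma fhat_low: "s \<le> real (t 1) \<Longrightarrow> fhat p f \<Phi> t (Pt n z s) = Root"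
  by (simp add: fhat_def)

lemma fhat_high: "real (t 1) < s \<Longrightarrow> fhat p f \<Phi> t (Pt n z s) =
   Pt (stage t s) (f (stage t s) (pnm p (\<Phi> (stage t s)) n z)) (rescale_height t s)"
  by (simp add: fhat_def Let_def stage_def rescale_height_def)

lemma height_fhat: "height (fhat p f \<Phi> t a) = rescale_height t (height a)"
  by (cases a) (auto simp: fhat_def rescale_height_def Let_def stage_def)

lemma height_nonneg: "a \<in> tree_pts X \<Longrightarrow> 0 \<le> height a"
  unfolding tree_pts_def by auto

lemma meet_height_nonneg: "0 \<le> height a \<Longrightarrow> 0 \<le> height b \<Longrightarrow> 0 \<le> meet_height p a b"
  by (cases a; cases b) auto

lemma meet_height_le: "0 \<le> height a \<Longrightarrow> meet_height p a b \<le> height a"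
  "0 \<le> height b \<Longrightarrow> meet_height p a b \<le> height b"
  by (cases a; cases b; auto)+

lemma meet_height_ge:
  assumes "1 \<le> j" "j \<le> n" "j \<le> m" "pnm p j n x = pnm p j m y"
  shows "min (min s r) (real j) \<le> meet_height p (Pt n x s) (Pt m y r)"
proof -
  let ?S = "{j. 1 \<le> j \<and> j \<le> min n m \<and> pnm p j n x = pnm p j m y}"
  have "finite ?S" by (rule finite_subset[of _ "{..min n m}"]) auto
  then have "j \<le> Max ({0} \<union> ?S)" using assms by (intro Max_ge) auto
  then have "real j \<le> real (Max ({0} \<union> ?S))" by simp
  then show ?thesis by (simp add: min_le_iff_disj)
qed

lemma common_ancestor_below_meet:
  assumes "real h < meet_height p (Pt n x s) (Pt m y r)"
  shows "pnm p h n x = pnm p h m y"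
proof -
  let ?S = "{j. 1 \<le> j \<and> j \<le> min n m \<and> pnm p j n x = pnm p j m y}"
  define J where "J = Max ({0} \<union> ?S)"
  have "finite ?S" by (rule finite_subset[of _ "{..min n m}"]) auto
  then have "J \<in> {0} \<union> ?S" unfolding J_def by (intro Max_in) auto
  moreover have "h < J" using assms J_def by simp
  ultimately have "J \<le> n" "J \<le> m" "pnm p J n x = pnm p J m y" "h < J" by auto
  then show ?thesis using pnm_trans[of h J n p x] pnm_trans[of h J m p y] by simp
qed

locale fhat_setting = time_scale t
  for t :: "nat \<Rightarrow> nat" +
  fixes X :: "nat \<Rightarrow> 'a set" and p :: "nat \<Rightarrow> 'a \<Rightarrow> 'a"
    and q :: "nat \<Rightarrow> 'b \<Rightarrow> 'b" and f :: "nat \<Rightarrow> 'a \<Rightarrow> 'b" and \<Phi> :: "nat \<Rightarrow> nat"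
  assumes inv_seq: "inv_seq X p"
    and \<Phi>_1: "\<Phi> 1 < t 1"
    and \<Phi>_Suc: "\<And>k. 1 \<le> k \<Longrightarrow> \<Phi> (Suc k) < t k"
    and compatible: "\<And>k i x. 1 \<le> i \<Longrightarrow> i \<le> k \<Longrightarrow> x \<in> X (t k) \<Longrightarrow>
           f i (pnm p (\<Phi> i) (t k) x) = pnm q i (Suc k) (f (Suc k) (pnm p (\<Phi> (Suc k)) (t k) x))"
begin

lemma \<Phi>_less_t:
  assumes "1 \<le> j" shows "\<Phi> j < t j"
proof (cases "j = 1")
  case False
  then obtain k where "j = Suc k" "1 \<le> k" using assms by (cases j) auto
  then show ?thesis using \<Phi>_Suc[of k] t_Suc_gt[of k] by simp
qed (use \<Phi>_1 in simp)

lemma compatible_below: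
  assumes z: "z \<in> X n" and j: "1 \<le> j" "j \<le> k" and n: "k = 1 \<or> t (k - 1) \<le> n"
  shows "pnm q j k (f k (pnm p (\<Phi> k) n z)) = f j (pnm p (\<Phi> j) n z)"
proof (cases "j = k")
  case False
  then obtain k0 where k0: "k = Suc k0" "1 \<le> k0" "j \<le> k0" using j by (cases k) auto
  have tk0: "1 \<le> t k0" "t k0 \<le> n" using \<Phi>_less_t[OF k0(2)] n k0 by auto
  define x where "x = pnm p (t k0) n z"
  have "x \<in> X (t k0)" using pnm_in[OF inv_seq tk0 z] x_def by simp
  then have "f j (pnm p (\<Phi> j) (t k0) x) = pnm q j k (f k (pnm p (\<Phi> k) (t k0) x))"
    using compatible[OF j(1) k0(3)] k0(1) by simp
  moreover have "pnm p (\<Phi> j) (t k0) x = pnm p (\<Phi> j) n z"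
    using \<Phi>_less_t[OF j(1)] t_mono[OF j(1) k0(3)] tk0 pnm_trans[of "\<Phi> j" "t k0" n p z] x_def
    by simp
  moreover have "pnm p (\<Phi> k) (t k0) x = pnm p (\<Phi> k) n z"
    using \<Phi>_Suc[OF k0(2)] tk0 pnm_trans[of "\<Phi> (Suc k0)" "t k0" n p z] x_def k0 by simp
  ultimately show ?thesis by simp
qed simp

lemma compatible_fhat:
  assumes "z \<in> X n" "s \<le> real n" "real (t 1) < s" "1 \<le> j" "j \<le> stage t s"
  shows "pnm q j (stage t s) (f (stage t s) (pnm p (\<Phi> (stage t s)) n z))
           = f j (pnm p (\<Phi> j) n z)"
proof (rule compatible_below[OF assms(1,4,5)])
  have "stage t s \<noteq> 1 \<Longrightarrow> t (stage t s - 1) < t (stage t s)"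
    using stage_spec(1)[OF assms(3)] t_Suc_gt[of "stage t s - 1"] by simp
  then show "stage t s = 1 \<or> t (stage t s - 1) \<le> n"
    using stage_spec(2)[OF assms(3)] assms(2) by linarith
qed

lemma rescale_meet_le_meet_fhat:
  assumes a: "a \<in> tree_pts X" and b: "b \<in> tree_pts X"
  shows "rescale_height t (meet_height p a b)
           \<le> meet_height q (fhat p f \<Phi> t a) (fhat p f \<Phi> t b)"
proof (cases "meet_height p a b \<le> real (t 1)")
  case True
  have "0 \<le> meet_height q (fhat p f \<Phi> t a) (fhat p f \<Phi> t b)"
    by (intro meet_height_nonneg) (simp_all add: height_fhat rescale_height_nonneg)
  then show ?thesis using True by (simp add: rescale_height_low)
next
  case False
  define M where "M = meet_height p a b"
  have M: "real (t 1) < M" using False M_def by simp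
  then obtain n x s m y r where ab: "a = Pt n x s" "b = Pt m y r"
    and "x \<in> X n" "s \<le> real n" "y \<in> X m" "r \<le> real m"
    using a b M_def unfolding tree_pts_def by auto
  then have Ms: "M \<le> s" "M \<le> r" using M_def by auto
  then have s: "real (t 1) < s" and r: "real (t 1) < r" using M by auto
  define j where "j = stage t M"
  have j: "1 \<le> j" "j \<le> stage t s" "j \<le> stage t r"
    using stage_spec(1)[OF M] stage_mono[OF M Ms(1)] stage_mono[OF M Ms(2)] j_def by auto
  have "real (\<Phi> j) < meet_height p (Pt n x s) (Pt m y r)"
    using \<Phi>_less_t[OF j(1)] stage_spec(2)[OF M] j_def M_def ab by simp
  then have "pnm p (\<Phi> j) n x = pnm p (\<Phi> j) m y"
    by (rule common_ancestor_below_meet)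
  then have "pnm q j (stage t s) (f (stage t s) (pnm p (\<Phi> (stage t s)) n x))
           = pnm q j (stage t r) (f (stage t r) (pnm p (\<Phi> (stage t r)) m y))"
    using compatible_fhat \<open>x \<in> X n\<close> \<open>s \<le> real n\<close> \<open>y \<in> X m\<close> \<open>r \<le> real m\<close> s r j by simp
  then have "min (min (rescale_height t s) (rescale_height t r)) (real j)
             \<le> meet_height q (fhat p f \<Phi> t a) (fhat p f \<Phi> t b)"
    unfolding ab fhat_high[of t, OF s] fhat_high[of t, OF r] by (rule meet_height_ge[OF j])
  moreover have "rescale_height t M \<le> real j"
    using rescale_height_bounds(2)[OF M] j_def by simp
  ultimately show ?thesis using rescale_height_mono[OF Ms(1)] rescale_height_mono[OF Ms(2)]
    M_def by simp
qed

theorem fhat_nonexpansive: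
  assumes a: "a \<in> tree_pts X" and b: "b \<in> tree_pts X"
  shows "tdist q (fhat p f \<Phi> t a) (fhat p f \<Phi> t b) \<le> tdist p a b"
proof -
  let ?M = "meet_height p a b"
  have "0 \<le> ?M" "?M \<le> height a" "?M \<le> height b"
    using height_nonneg[OF a] height_nonneg[OF b] meet_height_nonneg meet_height_le by auto
  then show ?thesis
    using rescale_height_lipschitz[of ?M "height a"] rescale_height_lipschitz[of ?M "height b"]
      rescale_meet_le_meet_fhat[OF a b]
    unfolding tdist_def height_fhat by simp
qed

end

theorem proposition4p2p1:
  fixes X :: "nat \<Rightarrow> 'a set" and p :: "nat \<Rightarrow> 'a \<Rightarrow> 'a"
    and Y :: "nat \<Rightarrow> 'b set" and q :: "nat \<Rightarrow> 'b \<Rightarrow> 'b"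
    and f :: "nat \<Rightarrow> 'a \<Rightarrow> 'b" and \<Phi> :: "nat \<Rightarrow> nat" and t :: "nat \<Rightarrow> nat"
  assumes "inv_seq X p" and "inv_seq Y q"
    and "inv_seq_morphism X p Y q f \<Phi>"
    and "t 1 > \<Phi> 1" and "t 1 > \<Phi> 2"
    and "\<And>k. k \<ge> 2 \<Longrightarrow> t k > t (k - 1) \<and> t k > \<Phi> (Suc k)"
    and "\<And>k i x. 1 \<le> i \<Longrightarrow> i \<le> k \<Longrightarrow> x \<in> X (t k) \<Longrightarrow>
           f i (pnm p (\<Phi> i) (t k) x) = pnm q i (Suc k) (f (Suc k) (pnm p (\<Phi> (Suc k)) (t k) x))"
    and "a \<in> tree_pts X" and "b \<in> tree_pts X"
  shows "tdist q (fhat p f \<Phi> t a) (fhat p f \<Phi> t b) \<le> tdist p a b"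
proof -
  have "\<And>k. 1 \<le> k \<Longrightarrow> t k < t (Suc k) \<and> \<Phi> (Suc k) < t k"
  proof -
    fix k :: nat assume k: "1 \<le> k"
    show "t k < t (Suc k) \<and> \<Phi> (Suc k) < t k"
      using assms(6)[of "Suc k"] assms(6)[of k] assms(5) k
      by (cases "k = 1") (auto simp: numeral_2_eq_2)
  qed
  then interpret fhat_setting t X p q f \<Phi>
    using assms(1,4,7) by unfold_locales auto
  show ?thesis using fhat_nonexpansive assms(8,9) .
qed

end
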